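(* In the setting described in the context, if type A blowup occurs, then either $0<v_0<1$ and $\omega_0>-\frac{\nu}{2}f_0(v_0)$, or $v_0>1$ and $\omega_0<-\frac{\nu}{2}f_0(v_0)$.
   Context: Fix $\nu>0$, $v_0>0$ with $v_0\neq1$, and $\omega_0\in\mathbb{R}$. Consider the real ODE system $\frac{d\omega_{-2,i}}{dt}=\omega_{-2,i}^2\frac{1-2v_c^2+5v_c^4}{4v_c^2(1-v_c^2)^2}-\nu\omega_{-2,i}$, $\frac{dv_c}{dt}=-\omega_{-2,i}\frac{1+v_c^2}{4v_c(1-v_c^2)}$ with $v_c(0)=v_0$, $\omega_{-2,i}(0)=\omega_0$; its solution (continued through $v_c=1$) is characterized as follows. Let $F(v)=\frac{v(v^2-1)}{(v^2+1)^2}+\arctan v$, which is a strictly increasing bijection from $(0,\infty)$ onto $(0,\pi/2)$, and let $G(t)=F(v_0)+\frac{2\omega_0 v_0(1-e^{-\nu t})}{\nu(v_0^2-1)(v_0^2+1)^2}$. Then $v_c(t)$ is defined by $F(v_c(t))=G(t)$ for as long as $G(t)\in(0,\pi/2)$, and $\omega_{-2,i}(t)=\omega_0e^{-\nu t}\frac{v_0}{v_c(t)}\frac{v_c(t)^2-1}{v_0^2-1}\left(\frac{v_c(t)^2+1}{v_0^2+1}\right)^2$. Type A blowup means: there is a finite $t_c>0$ with $v_c(t)>0$ on $[0,t_c)$ and $v_c(t)\to0^+$ as $t\to t_c^-$. Type B blowup means: there is a finite $t_c>0$ with $v_c(t)\in(0,\infty)$ on $[0,t_c)$ and $v_c(t)\to+\infty$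 as $t\to t_c^-$. Here $f_0(x)=(x^2-1)^2+\frac{(x^2+1)^2}{x}(x^2-1)\arctan(x)$ and $f_\infty(x)=(x^2-1)^2+\frac{(x^2+1)^2}{x}(x^2-1)\left(\arctan(x)-\frac{\pi}{2}\right)$ for $x>0$. *)

theory Defs
  imports "HOL-Analysis.Analysis"
begin

definition F :: "real \<Rightarrow> real" where
  "F v = v * (v^2 - 1) / (v^2 + 1)^2 + arctan v"

definition G :: "real \<Rightarrow> real \<Rightarrow> real \<Rightarrow> real \<Rightarrow> real" where
  "G \<nu> v0 \<omega>0 t = F v0 + 2 * \<omega>0 * v0 * (1 - exp (- \<nu> * t)) / (\<nu> * (v0^2 - 1) * (v0^2 + 1)^2)"

definition f0 :: "real \<Rightarrow> real" where
  "f0 x = (x^2 - 1)^2 + (x^2 + 1)^2 / x * (x^2 - 1) * arctan x"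

definition f_inf :: "real \<Rightarrow> real" where
  "f_inf x = (x^2 - 1)^2 + (x^2 + 1)^2 / x * (x^2 - 1) * (arctan x - pi / 2)"

text \<open>v_c(t) is the positive solution of F(v_c(t)) = G(t), defined while G(t) lies in (0, pi/2).\<close>
definition typeA_blowup :: "real \<Rightarrow> real \<Rightarrow> real \<Rightarrow> bool" where
  "typeA_blowup \<nu> v0 \<omega>0 \<longleftrightarrow>
    (\<exists>tc > 0. \<exists>vc :: real \<Rightarrow> real.
       (\<forall>t \<in> {0..<tc}. vc t > 0 \<and> F (vc t) = G \<nu> v0 \<omega>0 t) \<and>
       (vc \<longlongrightarrow> 0) (at_left tc))"

end

theory Submission
  imports Defs
begin

text \<open>A type A blowup at time \<open>t\<^sub>c\<close> forces \<open>G(t\<^sub>c) = F(0) = 0\<close>, by continuity of \<open>F\<close> and \<open>G\<close>.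
  With \<open>s = 1 - exp(-\<nu> t\<^sub>c) \<in> (0,1)\<close> and \<open>f\<^sub>0(v) = (v\<^sup>2+1)\<^sup>2 (v\<^sup>2-1) F(v) / v\<close>, the
  equation \<open>G(t\<^sub>c) = 0\<close> reads \<open>\<omega>\<^sub>0 s = -\<nu> f\<^sub>0(v\<^sub>0) / 2\<close>. Since \<open>F\<close> is increasing with \<open>F(0) = 0\<close>,
  \<open>f\<^sub>0(v\<^sub>0)\<close> has the sign of \<open>v\<^sub>0 - 1\<close>; hence \<open>\<omega>\<^sub>0\<close> has the opposite sign, and dividing
  by \<open>s < 1\<close> moves \<open>\<omega>\<^sub>0\<close> strictly past \<open>-\<nu> f\<^sub>0(v\<^sub>0) / 2\<close>.\<close>

lemma square_plus_one_pos: "(x::real)^2 + 1 > 0"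
  by (simp add: add_nonneg_pos)

lemma has_real_derivative_F: "(F has_real_derivative 8 * x^2 / (x^2 + 1)^3) (at x)"
proof -
  have combine_fractions: "N / (u^2 * u^2) + 1 / u = 8 * x^2 / u^3"
    if "u > 0" "N = 8 * x^2 * u - u^3" for N u :: real
  proof -
    have "N / (u^2 * u^2) + 1 / u = (N + u^3) / (u * u^3)"
      using \<open>u > 0\<close> by (simp add: field_simps power2_eq_square power3_eq_cube)
    with that show ?thesis
      by simp
  qed
  have denominator_nonzero: "(x^2 + 1)^2 \<noteq> 0"
    using square_plus_one_pos [of x] by simp
  have "(F has_real_derivative
      (((x^2 - 1) + 2 * x * x) * (x^2 + 1)^2 - x * (x^2 - 1) * (2 * (2 * x * (x^2 + 1))))
        / ((x^2 + 1)^2 * (x^2 + 1)^2) + 1 / (1 + x^2)) (at x)"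
    unfolding F_def [abs_def]
    by (rule derivative_eq_intros refl denominator_nonzero)+ (simp add: inverse_eq_divide)
  moreover have "(((x^2 - 1) + 2 * x * x) * (x^2 + 1)^2 - x * (x^2 - 1) * (2 * (2 * x * (x^2 + 1))))
        / ((x^2 + 1)^2 * (x^2 + 1)^2) + 1 / (1 + x^2) = 8 * x^2 / (x^2 + 1)^3"
    unfolding add.commute [of 1 "x^2"]
    by (rule combine_fractions [OF square_plus_one_pos]) algebra
  ultimately show ?thesis
    by simp
qed

lemma isCont_F: "isCont F x"
  using has_real_derivative_F DERIV_isCont by blast

lemma F_pos:
  assumes "v > 0"
  shows "F v > 0"
proof -
  obtain z where "0 < z" "z < v" and mvt: "F v - F 0 = (v - 0) * (8 * z^2 / (z^2 + 1)^3)"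
    using MVT2 [of 0 v F "\<lambda>y. 8 * y^2 / (y^2 + 1)^3"] assms has_real_derivative_F by auto
  then have "(v - 0) * (8 * z^2 / (z^2 + 1)^3) > 0"
    using assms by (simp add: add_pos_nonneg)
  with mvt show ?thesis
    by (simp add: F_def)
qed

lemma f0_eq_F:
  assumes "x \<noteq> 0"
  shows "f0 x = (x^2 + 1)^2 * (x^2 - 1) / x * F x"
proof -
  have "x^2 + 1 \<noteq> 0"
    using square_plus_one_pos [of x] by simp
  with assms have "(x^2 + 1)^2 * (x^2 - 1) / x * (x * (x^2 - 1) / (x^2 + 1)^2) = (x^2 - 1)^2"
    by (simp add: power2_eq_square [of "x^2 - 1"])
  then show ?thesis
    unfolding f0_def F_def distrib_left by simp
qed

lemma f0_neg:
  assumes "0 < x" "x < 1"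
  shows "f0 x < 0"
proof -
  have "x^2 - 1 < 0"
    using assms by (simp add: power_less_one_iff)
  then have "(x^2 + 1)^2 * (x^2 - 1) * F x < 0"
    using assms F_pos [of x] square_plus_one_pos [of x]
    by (intro mult_neg_pos mult_pos_neg) simp_all
  then show ?thesis
    using assms by (simp add: f0_eq_F divide_neg_pos)
qed

lemma f0_pos:
  assumes "1 < x"
  shows "f0 x > 0"
proof -
  have "x^2 - 1 > 0"
    using assms by (simp add: one_less_power)
  then show ?thesis
    using assms F_pos [of x] square_plus_one_pos [of x] by (simp add: f0_eq_F)
qed

lemma G_eq: "G \<nu> v0 \<omega>0 t =
    F v0 + 2 * \<omega>0 * v0 / (\<nu> * (v0^2 - 1) * (v0^2 + 1)^2) * (1 - exp (- \<nu> * t))"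
  by (simp add: G_def)

lemma isCont_G: "isCont (G \<nu> v0 \<omega>0) t"
  unfolding G_eq [abs_def] by (intro continuous_intros)

lemma typeA_blowup_imp_G_zero:
  assumes "typeA_blowup \<nu> v0 \<omega>0"
  obtains tc where "tc > 0" "G \<nu> v0 \<omega>0 tc = 0"
proof -
  obtain tc vc where "tc > 0" and vc: "\<forall>t \<in> {0..<tc}. vc t > 0 \<and> F (vc t) = G \<nu> v0 \<omega>0 t"
    and "(vc \<longlongrightarrow> 0) (at_left tc)"
    using assms unfolding typeA_blowup_def by blast
  then have "((\<lambda>t. F (vc t)) \<longlongrightarrow> F 0) (at_left tc)"
    using isCont_F isCont_tendsto_compose by blast
  moreover have "eventually (\<lambda>t. F (vc t) = G \<nu> v0 \<omega>0 t) (at_left tc)"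
    unfolding eventually_at_left_field using \<open>tc > 0\<close> vc by (intro exI [of _ 0]) auto
  ultimately have "(G \<nu> v0 \<omega>0 \<longlongrightarrow> F 0) (at_left tc)"
    using tendsto_cong by force
  moreover have "(G \<nu> v0 \<omega>0 \<longlongrightarrow> G \<nu> v0 \<omega>0 tc) (at_left tc)"
    using isCont_G by (simp add: isCont_def filterlim_at_split)
  ultimately have "G \<nu> v0 \<omega>0 tc = 0"
    using tendsto_unique [OF trivial_limit_at_left_real] by (simp add: F_def)
  with \<open>tc > 0\<close> show thesis
    using that by blast
qed

lemma G_zero_iff:
  assumes "\<nu> \<noteq> 0" "v0 > 0" "v0 \<noteq> 1"
  shows "G \<nu> v0 \<omega>0 t = 0 \<longleftrightarrow> \<omega>0 * (1 - exp (- \<nu> * t)) = - \<nu> / 2 * f0 v0"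
proof -
  have "v0^2 - 1 \<noteq> 0" "v0^2 + 1 \<noteq> 0"
    using assms(2,3) square_plus_one_pos [of v0] by (auto simp: power2_eq_1_iff)
  with assms show ?thesis
    unfolding G_def f0_eq_F [OF \<open>v0 > 0\<close> [THEN less_imp_neq, symmetric]]
    by (auto simp: field_simps)
qed

theorem lemma3p2:
  fixes \<nu> v0 \<omega>0 :: real
  assumes "\<nu> > 0" and "v0 > 0" and "v0 \<noteq> 1"
    and "typeA_blowup \<nu> v0 \<omega>0"
  shows "(0 < v0 \<and> v0 < 1 \<and> \<omega>0 > - \<nu> / 2 * f0 v0) \<or>
         (v0 > 1 \<and> \<omega>0 < - \<nu> / 2 * f0 v0)"
proof -
  obtain tc where "tc > 0" and "G \<nu> v0 \<omega>0 tc = 0"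
    using typeA_blowup_imp_G_zero [OF assms(4)] .
  define s where "s = 1 - exp (- \<nu> * tc)"
  have s: "0 < s" "s < 1"
    using \<open>tc > 0\<close> assms(1) by (auto simp: s_def)
  have blowup_eq: "\<omega>0 * s = - \<nu> / 2 * f0 v0"
    using G_zero_iff assms(1-3) \<open>G \<nu> v0 \<omega>0 tc = 0\<close> unfolding s_def by simp
  show ?thesis
  proof (cases "v0 < 1")
    case True
    then have "\<omega>0 * s > 0"
      using blowup_eq f0_neg assms(1,2) by (simp add: mult_pos_neg)
    then have "\<omega>0 > \<omega>0 * s"
      using s by (simp add: zero_less_mult_iff)
    with True blowup_eq assms(2) show ?thesis by simp
  next
    case False
    then have "v0 > 1" using assms(3) by simp
    then have "\<omega>0 * s < 0"
      using blowup_eq f0_pos assms(1) by simp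
    then have "\<omega>0 < \<omega>0 * s"
      using s by (simp add: mult_less_0_iff)
    with \<open>v0 > 1\<close> blowup_eq show ?thesis by simp
  qed
qed

end
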